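(* Let $G$ be a compact abelian group with discrete dual group $\Gamma$, let $N = p_1^{n_1} \cdots p_k^{n_k}$ with distinct primes $p_i$ and $n_i \in \mathbb{N}$, and let $E \subset \Gamma$. Then $E$ is $N$-PR if and only if, for all $1 \le i \le k$, the map $\pi_{p_i^{n_i}}$ is one-to-one on $E$ and $\pi_{p_i^{n_i}}(E)$ is $p_i$-PR as a subset of $\Gamma/\Gamma_{p_i^{n_i}}$.
   Context: For a discrete abelian group $\Delta$ with compact dual $\widehat{\Delta}$ and $M \in \mathbb{N}$, a subset $E \subset \Delta$ is $M$-PR if for every function $\varphi: E \to \mathbb{Z}_M$ (the $M$-th roots of unity in the unit circle) there exists $x \in \widehat{\Delta}$ with $\varphi(\gamma) = \gamma(x)$ for all $\gamma \in E$. Let $\Gamma_0$ be the torsion subgroup of $\Gamma$; for a prime $p$ and $m \in \mathbb{N}$, $\Gamma_{p^m}$ is the subgroup of $\Gamma_0$ of elements whose order is not divisible by $p^m$, and $\pi_{p^m}: \Gamma \to \Gamma/\Gamma_{p^m}$ is the quotient map. *)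

theory Defs
  imports "HOL-Algebra.Algebra" "HOL-Analysis.Analysis"
begin

definition circle_group :: "complex monoid" where
  "circle_group = \<lparr>carrier = {z. cmod z = 1}, monoid.mult = (*), one = 1\<rparr>"

definition roots_of_unity :: "nat \<Rightarrow> complex set" where
  "roots_of_unity M = {z. z ^ M = 1}"

text \<open>For a discrete abelian group D, its dual is the group of all homomorphisms
  D \<rightarrow> circle (every character of a discrete group is continuous), and
  gamma(x) for x in the dual is x gamma.\<close>
definition M_PR :: "('a, 'b) monoid_scheme \<Rightarrow> nat \<Rightarrow> 'a set \<Rightarrow> bool" where
  "M_PR D M E \<longleftrightarrow>
     (\<forall>\<phi> \<in> E \<rightarrow> roots_of_unity M. \<exists>c \<in> hom D circle_group. \<forall>\<gamma>\<in>E. c \<gamma> = \<phi> \<gamma>)"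

definition torsion_subgroup :: "('a, 'b) monoid_scheme \<Rightarrow> 'a set" where
  "torsion_subgroup D = {x \<in> carrier D. group.ord D x \<noteq> 0}"

definition Gamma_pm :: "('a, 'b) monoid_scheme \<Rightarrow> nat \<Rightarrow> nat \<Rightarrow> 'a set" where
  "Gamma_pm D p m = {x \<in> torsion_subgroup D. \<not> (p ^ m) dvd group.ord D x}"

definition pi_pm :: "('a, 'b) monoid_scheme \<Rightarrow> nat \<Rightarrow> nat \<Rightarrow> 'a \<Rightarrow> 'a set" where
  "pi_pm D p m x = Gamma_pm D p m #>\<^bsub>D\<^esub> x"

end

theory Submission
  imports Defs "HOL-Number_Theory.Cong"
begin

text \<open>
  Restricting characters to \<open>E\<close> turns the \<open>M\<close>-PR property into a statement about the
  relations among the elements of \<open>E\<close>: the characters of \<open>\<Gamma>\<close> that are trivial on a subgroup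
  \<open>H\<close> realise every \<open>Z_M\<close>-valued function on \<open>E\<close> iff every relation \<open>\<Prod>x\<in>E. x ^ u x \<in> H\<close>
  has all its coefficients \<open>u x\<close> divisible by \<open>M\<close>. One direction tests a relation against a
  character that takes a primitive \<open>M\<close>-th root of unity at a single point of \<open>E\<close>. For the
  other, a prescribed function defines a character on the subgroup generated by \<open>E\<close> and \<open>H\<close>,
  which extends to \<open>\<Gamma>\<close> by Zorn's lemma because the circle group is divisible.

  Divisibility by \<open>N\<close> splits into divisibility by its pairwise coprime prime power factors.
  Every relation with value \<open>1\<close> is divisible by \<open>p ^ m\<close> iff every relation modulo \<open>\<Gamma>_{p^m}\<close>
  is divisible by \<open>p\<close>: multiply a relation by the order of its value, respectively divide a
  relation by successive powers of \<open>p\<close>. Finally, if all relations modulo \<open>H\<close> are divisible by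
  a prime then \<open>\<pi>_H\<close> is injective on \<open>E\<close>, and the characters of \<open>\<Gamma>\<close> trivial on \<open>H\<close> are
  exactly the characters of \<open>\<Gamma>/H\<close>.
\<close>

section \<open>The circle group\<close>

lemma carrier_circle_group [simp]: "carrier circle_group = {z. cmod z = 1}"
  by (simp add: circle_group_def)

lemma mult_circle_group [simp]: "z \<otimes>\<^bsub>circle_group\<^esub> w = z * w"
  by (simp add: circle_group_def)

lemma one_circle_group [simp]: "\<one>\<^bsub>circle_group\<^esub> = 1"
  by (simp add: circle_group_def)

lemma group_circle_group: "group circle_group"
proof (rule groupI)
  fix z assume "z \<in> carrier circle_group"
  then show "\<exists>w\<in>carrier circle_group. w \<otimes>\<^bsub>circle_group\<^esub> z = \<one>\<^bsub>circle_group\<^esub>"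
    by (intro bexI[of _ "inverse z"]) (auto simp: norm_inverse intro!: left_inverse)
qed (auto simp: norm_mult)

lemma comm_group_circle_group: "comm_group circle_group"
  by (rule group.group_comm_groupI[OF group_circle_group]) (simp add: mult.commute)

lemma inv_circle_group: "z \<in> carrier circle_group \<Longrightarrow> inv\<^bsub>circle_group\<^esub> z = inverse z"
  by (rule group.inv_equality[OF group_circle_group]) (auto simp: norm_inverse intro!: left_inverse)

lemma nat_pow_circle_group: "z [^]\<^bsub>circle_group\<^esub> (n::nat) = z ^ n"
  by (induction n) (simp_all add: mult.commute)

lemma int_pow_circle_group:
  assumes "z \<in> carrier circle_group"
  shows "z [^]\<^bsub>circle_group\<^esub> (k::int) = z powi k"
proof -
  have "z ^ n \<in> carrier circle_group" for n
    using assms by (simp add: norm_power)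
  then show ?thesis
    by (simp add: int_pow_def2 nat_pow_circle_group inv_circle_group power_int_def power_inverse)
qed

lemma hom_circle_group_iff:
  "c \<in> hom G circle_group \<longleftrightarrow>
    (\<forall>x\<in>carrier G. cmod (c x) = 1) \<and> (\<forall>x\<in>carrier G. \<forall>y\<in>carrier G. c (x \<otimes>\<^bsub>G\<^esub> y) = c x * c y)"
  by (auto simp: hom_def)

lemma roots_of_unity_subset_circle_group:
  assumes "M > 0"
  shows "roots_of_unity M \<subseteq> carrier circle_group"
proof
  fix z assume "z \<in> roots_of_unity M"
  then have "cmod z ^ M = 1 ^ M"
    by (simp add: roots_of_unity_def flip: norm_power)
  then show "z \<in> carrier circle_group"
    using assms power_eq_imp_eq_base[of "cmod z" M 1] by simp
qed

lemma circle_group_nth_root: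
  assumes "z \<in> carrier circle_group" and "m > 0"
  obtains w where "w \<in> carrier circle_group" and "w ^ m = z"
proof
  define w where "w = exp (Ln z / of_nat m)"
  have "z \<noteq> 0"
    using assms by auto
  have "w ^ m = exp (of_nat m * (Ln z / of_nat m))"
    unfolding w_def by (rule exp_of_nat_mult[symmetric])
  also have "\<dots> = z"
    using assms \<open>z \<noteq> 0\<close> by simp
  finally show "w ^ m = z" .
  then have "cmod w ^ m = 1 ^ m"
    using assms by (simp flip: norm_power)
  then show "w \<in> carrier circle_group"
    using assms power_eq_imp_eq_base[of "cmod w" m 1] by simp
qed

lemma primitive_root_of_unity:
  assumes "M > 0"
  obtains \<omega> :: complex where "\<omega> ^ M = 1" and "\<And>j::int. \<omega> powi j = 1 \<Longrightarrow> int M dvd j"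
proof
  define \<omega> where "\<omega> = exp (2 * of_real pi * \<i> / of_nat M)"
  have "\<omega> ^ M = exp (of_nat M * (2 * of_real pi * \<i> / of_nat M))"
    unfolding \<omega>_def by (rule exp_of_nat_mult[symmetric])
  also have "\<dots> = 1"
    using assms by simp
  finally show "\<omega> ^ M = 1" .
  fix j :: int assume "\<omega> powi j = 1"
  then have "exp (of_int j * (2 * of_real pi * \<i> / of_nat M)) = 1"
    unfolding \<omega>_def by (simp add: exp_power_int)
  then obtain n :: int where "Im (of_int j * (2 * of_real pi * \<i> / of_nat M)) = of_int (2 * n) * pi"
    unfolding exp_eq_1 by blast
  then have "2 * pi * of_int j / of_nat M = of_int (2 * n) * pi"
    by (simp add: mult_ac)
  then have "of_int j = (of_int (n * int M) :: real)"
    using assms pi_gt_zero by (simp add: field_simps)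
  then have "j = n * int M"
    by (simp only: of_int_eq_iff)
  then show "int M dvd j"
    by simp
qed

section \<open>Characters as graphs and their extension\<close>

lemma fst_hom_DirProd: "fst \<in> hom (G \<times>\<times> H) G"
  by (auto simp: hom_def mult_DirProd')

lemma snd_hom_DirProd: "snd \<in> hom (G \<times>\<times> H) H"
  by (auto simp: hom_def mult_DirProd')

lemma DirProd_int_pow:
  assumes "group G" and "group H" and "x \<in> carrier G" and "y \<in> carrier H"
  shows "(x, y) [^]\<^bsub>G \<times>\<times> H\<^esub> (k::int) = (x [^]\<^bsub>G\<^esub> k, y [^]\<^bsub>H\<^esub> k)"
proof -
  have GH: "group (G \<times>\<times> H)"
    using assms(1,2) by (rule DirProd_group)
  have "(x, y) \<in> carrier (G \<times>\<times> H)"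
    using assms(3,4) by simp
  then have "fst ((x, y) [^]\<^bsub>G \<times>\<times> H\<^esub> k) = x [^]\<^bsub>G\<^esub> k"
    and "snd ((x, y) [^]\<^bsub>G \<times>\<times> H\<^esub> k) = y [^]\<^bsub>H\<^esub> k"
    using hom_int_pow[OF fst_hom_DirProd _ GH assms(1)] hom_int_pow[OF snd_hom_DirProd _ GH assms(2)]
    by auto
  then show ?thesis
    by (metis prod.collapse)
qed

lemma comm_group_DirProd:
  assumes "comm_group G" and "comm_group H"
  shows "comm_group (G \<times>\<times> H)"
proof -
  interpret G: comm_group G by fact
  interpret H: comm_group H by fact
  show ?thesis
    by (rule group.group_comm_groupI[OF DirProd_group[OF G.is_group H.is_group]])
      (auto simp: G.m_comm H.m_comm)
qed

lemma subgroup_image_paired_hom: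
  assumes "group K" and "group G" and "group H" and "f \<in> hom K G" and "g \<in> hom K H"
  shows "subgroup ((\<lambda>u. (f u, g u)) ` carrier K) (G \<times>\<times> H)"
  using assms
  by (intro group_hom.img_is_subgroup) (simp add: group_hom_def group_hom_axioms_def hom_paired DirProd_group)

lemma (in group) subgroup_Union_chain:
  assumes "\<C> \<noteq> {}" and "subset.chain {H. subgroup H G} \<C>"
  shows "subgroup (\<Union>\<C>) G"
proof
  have sub: "subgroup H G" if "H \<in> \<C>" for H
    using assms(2) that by (auto simp: subset_chain_def)
  show "\<Union>\<C> \<subseteq> carrier G"
    using subgroup.subset[OF sub] by blast
  show "x \<otimes> y \<in> \<Union>\<C>" if xy: "x \<in> \<Union>\<C>" "y \<in> \<Union>\<C>" for x y
  proof -
    obtain H K where HK: "H \<in> \<C>" "K \<in> \<C>" "x \<in> H" "y \<in> K"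
      using xy by blast
    then consider "H \<subseteq> K" | "K \<subseteq> H"
      using assms(2) by (auto simp: subset_chain_def)
    then show ?thesis
    proof cases
      case 1
      then show ?thesis
        using HK subgroup.m_closed[OF sub[OF HK(2)], of x y] by blast
    next
      case 2
      then show ?thesis
        using HK subgroup.m_closed[OF sub[OF HK(1)], of x y] by blast
    qed
  qed
  obtain H where "H \<in> \<C>"
    using assms(1) by blast
  then show "\<one> \<in> \<Union>\<C>"
    using subgroup.one_closed[OF sub] by blast
  show "inv x \<in> \<Union>\<C>" if "x \<in> \<Union>\<C>" for x
    using that subgroup.m_inv_closed[OF sub] by blast
qed

lemma single_valued_Union_chain:
  assumes "subset.chain {r. single_valued r} \<C>"
  shows "single_valued (\<Union>\<C>)"
proof (rule single_valuedI)
  fix x y z assume "(x, y) \<in> \<Union>\<C>" "(x, z) \<in> \<Union>\<C>"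
  then obtain r s where rs: "r \<in> \<C>" "s \<in> \<C>" "(x, y) \<in> r" "(x, z) \<in> s"
    by blast
  then have "r \<subseteq> s \<or> s \<subseteq> r" and "single_valued r" and "single_valued s"
    using assms by (auto simp: subset_chain_def)
  then show "y = z"
    using rs(3,4) by (auto dest: single_valuedD)
qed

lemma (in group) single_valued_subgroup_DirProd:
  assumes "group H" and "subgroup R (G \<times>\<times> H)" and "\<And>w. (\<one>, w) \<in> R \<Longrightarrow> w = \<one>\<^bsub>H\<^esub>"
  shows "single_valued R"
proof (rule single_valuedI)
  interpret H: group H by fact
  fix x w w' assume "(x, w) \<in> R" "(x, w') \<in> R"
  moreover have "x \<in> carrier G" "w \<in> carrier H" "w' \<in> carrier H"
    using subgroup.subset[OF assms(2)] calculation by auto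
  ultimately have "(x, w) \<otimes>\<^bsub>G \<times>\<times> H\<^esub> inv\<^bsub>G \<times>\<times> H\<^esub> (x, w') \<in> R"
    using subgroup.m_closed[OF assms(2)] subgroup.m_inv_closed[OF assms(2)] by blast
  then have "(\<one>, w \<otimes>\<^bsub>H\<^esub> inv\<^bsub>H\<^esub> w') \<in> R"
    using \<open>x \<in> carrier G\<close> \<open>w' \<in> carrier H\<close> by (simp add: inv_DirProd[OF is_group assms(1)])
  then have "w \<otimes>\<^bsub>H\<^esub> inv\<^bsub>H\<^esub> w' = \<one>\<^bsub>H\<^esub>"
    by (rule assms(3))
  then show "w = w'"
    using \<open>w \<in> carrier H\<close> \<open>w' \<in> carrier H\<close> by (simp add: H.inv_solve_right')
qed

definition character_graph :: "('a, 'b) monoid_scheme \<Rightarrow> ('a \<times> complex) set \<Rightarrow> bool" where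
  "character_graph G R \<longleftrightarrow> subgroup R (G \<times>\<times> circle_group) \<and> single_valued R"

context group
begin

lemma character_graphD:
  assumes "character_graph G R"
  shows character_graph_subset: "R \<subseteq> carrier G \<times> carrier circle_group"
    and character_graph_one: "(\<one>, 1) \<in> R"
    and character_graph_mult: "\<And>x z y w. (x, z) \<in> R \<Longrightarrow> (y, w) \<in> R \<Longrightarrow> (x \<otimes> y, z * w) \<in> R"
    and character_graph_inv: "\<And>x z. (x, z) \<in> R \<Longrightarrow> (inv x, inverse z) \<in> R"
    and character_graph_int_pow: "\<And>x z. (x, z) \<in> R \<Longrightarrow> (x [^] (k::int), z powi k) \<in> R"
    and character_graph_unique: "\<And>x z w. (x, z) \<in> R \<Longrightarrow> (x, w) \<in> R \<Longrightarrow> z = w"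
proof -
  have sub: "subgroup R (G \<times>\<times> circle_group)" and sv: "single_valued R"
    using assms by (auto simp: character_graph_def)
  have GT: "group (G \<times>\<times> circle_group)"
    using is_group group_circle_group by (rule DirProd_group)
  show subset: "R \<subseteq> carrier G \<times> carrier circle_group"
    using subgroup.subset[OF sub] by simp
  show "(\<one>, 1) \<in> R"
    using subgroup.one_closed[OF sub] by simp
  show "(x \<otimes> y, z * w) \<in> R" if "(x, z) \<in> R" "(y, w) \<in> R" for x z y w
    using subgroup.m_closed[OF sub that] by simp
  show "(inv x, inverse z) \<in> R" if "(x, z) \<in> R" for x z
    using subgroup.m_inv_closed[OF sub that] that subset
    by (auto simp: inv_DirProd[OF is_group group_circle_group] inv_circle_group)
  show "(x [^] k, z powi k) \<in> R" if "(x, z) \<in> R" for x z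
    using group.subgroup_int_pow_closed[OF GT sub that, of k] that subset
    by (auto simp: DirProd_int_pow[OF is_group group_circle_group] int_pow_circle_group)
  show "z = w" if "(x, z) \<in> R" "(x, w) \<in> R" for x z w
    using sv that by (rule single_valuedD)
qed

lemma character_graph_Domain_subgroup:
  assumes "character_graph G R"
  shows "subgroup (Domain R) G"
proof -
  have "group_hom (G \<times>\<times> circle_group) G fst"
    by (simp add: group_hom_def group_hom_axioms_def DirProd_group group_circle_group fst_hom_DirProd)
  then have "subgroup (fst ` R) G"
    using assms unfolding character_graph_def by (blast intro: group_hom.subgroup_img_is_subgroup)
  then show ?thesis
    by (simp add: Domain_fst)
qed

lemma character_graph_Union_chain:
  assumes "\<C> \<noteq> {}" and "subset.chain {R. character_graph G R} \<C>"
  shows "character_graph G (\<Union>\<C>)"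
proof -
  have "subset.chain {R. subgroup R (G \<times>\<times> circle_group)} \<C>"
    and "subset.chain {R. single_valued R} \<C>"
    using assms(2) by (auto simp: subset_chain_def character_graph_def)
  then show ?thesis
    using group.subgroup_Union_chain[OF DirProd_group[OF is_group group_circle_group] assms(1)]
      single_valued_Union_chain
    by (simp add: character_graph_def)
qed

end

context comm_group
begin

lemma comm_group_DirProd_circle_group: "comm_group (G \<times>\<times> circle_group)"
  by (rule comm_group_DirProd[OF _ comm_group_circle_group]) unfold_locales

lemma int_pow_mem_subgroup_iff:
  assumes "subgroup K G" and "x \<in> carrier G"
  shows "x [^] (j::int) \<in> K \<longleftrightarrow> int (group.ord (G Mod K) (K #> x)) dvd j"
proof -
  interpret K: normal K G
    using assms(1) by (rule subgroup_imp_normal)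
  have Q: "group (G Mod K)"
    by (rule K.factorgroup_is_group)
  have xQ: "K #> x \<in> carrier (G Mod K)"
    using assms(2) by (auto simp: carrier_FactGroup)
  have "x [^] j \<in> K \<longleftrightarrow> K #> (x [^] j) = K"
    using assms K.rcos_const[OF is_group] rcos_self[of "x [^] j" K] by auto
  also have "K #> (x [^] j) = (K #> x) [^]\<^bsub>G Mod K\<^esub> j"
    using hom_int_pow[OF K.r_coset_hom_Mod assms(2) is_group Q] .
  also have "(K #> x) [^]\<^bsub>G Mod K\<^esub> j = K \<longleftrightarrow> int (group.ord (G Mod K) (K #> x)) dvd j"
    using group.int_pow_eq_id[OF Q xQ] by simp
  finally show ?thesis .
qed

text \<open>The exponents \<open>j\<close> with \<open>x ^ j \<in> Domain R\<close> form \<open>m\<int>\<close>, and \<open>z\<close> is an \<open>m\<close>-th root of the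
  value of \<open>R\<close> at \<open>x ^ m\<close>: this is where divisibility of the circle group is used.\<close>
lemma character_graph_compatible_value:
  assumes R: "character_graph G R" and x: "x \<in> carrier G"
  obtains z where "z \<in> carrier circle_group"
    and "\<And>j::int. x [^] j \<in> Domain R \<Longrightarrow> (x [^] j, z powi j) \<in> R"
proof -
  define m where "m = group.ord (G Mod Domain R) (Domain R #> x)"
  have dvd: "x [^] j \<in> Domain R \<longleftrightarrow> int m dvd j" for j :: int
    unfolding m_def using int_pow_mem_subgroup_iff[OF character_graph_Domain_subgroup[OF R] x] .
  obtain w where w: "(x [^] int m, w) \<in> R"
    using dvd[of "int m"] by auto
  obtain z where z: "z \<in> carrier circle_group" "z ^ m = w"
  proof (cases "m = 0")
    case True
    then have "w = 1"
      using w character_graph_one[OF R] character_graph_unique[OF R] by simp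
    then show ?thesis
      using True that[of 1] by simp
  next
    case False
    have "w \<in> carrier circle_group"
      using w character_graph_subset[OF R] by auto
    then show ?thesis
      using circle_group_nth_root False that by blast
  qed
  show ?thesis
  proof (rule that[OF z(1)])
    fix j :: int assume "x [^] j \<in> Domain R"
    then obtain t where j: "j = int m * t"
      using dvd by (meson dvdE)
    have "((x [^] int m) [^] t, w powi t) \<in> R"
      using w by (rule character_graph_int_pow[OF R])
    moreover have "(x [^] int m) [^] t = x [^] j"
      using x j by (simp add: int_pow_pow)
    moreover have "w powi t = z powi j"
      using j z(2) by (simp add: power_int_mult)
    ultimately show "(x [^] j, z powi j) \<in> R"
      by simp
  qed
qed

lemma mem_set_mult_powers_iff:
  "p \<in> R <#>\<^bsub>G \<times>\<times> circle_group\<^esub> range (\<lambda>k::int. (x [^] k, z powi k)) \<longleftrightarrow>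
    (\<exists>a b k. (a, b) \<in> R \<and> p = (a \<otimes> x [^] k, b * z powi k))"
proof
  assume "p \<in> R <#>\<^bsub>G \<times>\<times> circle_group\<^esub> range (\<lambda>k::int. (x [^] k, z powi k))"
  then obtain a b k where "(a, b) \<in> R" "p = (a, b) \<otimes>\<^bsub>G \<times>\<times> circle_group\<^esub> (x [^] k, z powi k)"
    unfolding set_mult_def by auto blast
  then show "\<exists>a b k. (a, b) \<in> R \<and> p = (a \<otimes> x [^] k, b * z powi k)"
    by auto
next
  assume "\<exists>a b k. (a, b) \<in> R \<and> p = (a \<otimes> x [^] k, b * z powi k)"
  then obtain a b k where "(a, b) \<in> R" "p = (a, b) \<otimes>\<^bsub>G \<times>\<times> circle_group\<^esub> (x [^] k, z powi k)"
    by auto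
  then show "p \<in> R <#>\<^bsub>G \<times>\<times> circle_group\<^esub> range (\<lambda>k::int. (x [^] k, z powi k))"
    unfolding set_mult_def by blast
qed

lemma subgroup_set_mult_powers:
  assumes "subgroup R (G \<times>\<times> circle_group)" and x: "x \<in> carrier G" and z: "z \<in> carrier circle_group"
  shows "subgroup (R <#>\<^bsub>G \<times>\<times> circle_group\<^esub> range (\<lambda>k::int. (x [^] k, z powi k))) (G \<times>\<times> circle_group)"
proof -
  have "(\<lambda>k. x [^] k) \<in> hom integer_group G"
    using x by (rule hom_integer_group_pow)
  moreover have "(\<lambda>k::int. z powi k) \<in> hom integer_group circle_group"
  proof -
    have "(\<lambda>k::int. z [^]\<^bsub>circle_group\<^esub> k) = (\<lambda>k. z powi k)"
      using z by (simp add: int_pow_circle_group)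
    then show ?thesis
      using group.hom_integer_group_pow[OF group_circle_group z] by simp
  qed
  ultimately have "subgroup (range (\<lambda>k::int. (x [^] k, z powi k))) (G \<times>\<times> circle_group)"
    using subgroup_image_paired_hom[OF group_integer_group is_group group_circle_group] by simp
  then show ?thesis
    using comm_group.mult_subgroups[OF comm_group_DirProd_circle_group assms(1)] by simp
qed

lemma character_graph_adjoin:
  assumes R: "character_graph G R" and x: "x \<in> carrier G" and z: "z \<in> carrier circle_group"
    and compatible: "\<And>j::int. x [^] j \<in> Domain R \<Longrightarrow> (x [^] j, z powi j) \<in> R"
  shows "character_graph G (R <#>\<^bsub>G \<times>\<times> circle_group\<^esub> range (\<lambda>k::int. (x [^] k, z powi k)))"
    (is "character_graph G ?R'")
proof -
  have sub: "subgroup ?R' (G \<times>\<times> circle_group)"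
    using R x z by (simp add: character_graph_def subgroup_set_mult_powers)
  have "single_valued ?R'"
  proof (rule single_valued_subgroup_DirProd[OF group_circle_group sub])
    fix w assume "(\<one>, w) \<in> ?R'"
    then obtain a b k where ab: "(a, b) \<in> R" and "\<one> = a \<otimes> x [^] k" and w: "w = b * z powi k"
      unfolding mem_set_mult_powers_iff by blast
    moreover have a: "a \<in> carrier G" and "b \<in> carrier circle_group"
      using ab character_graph_subset[OF R] by auto
    ultimately have "x [^] k \<otimes> a = \<one>"
      using x by (simp add: m_comm)
    then have "x [^] k = inv a"
      using inv_equality[of "x [^] k" a] x a by simp
    then have "(x [^] k, inverse b) \<in> R"
      using character_graph_inv[OF R ab] by simp
    then have "z powi k = inverse b"
      using compatible character_graph_unique[OF R] by blast
    then show "w = \<one>\<^bsub>circle_group\<^esub>"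
      using w \<open>b \<in> carrier circle_group\<close> by (auto intro: right_inverse)
  qed
  with sub show ?thesis
    unfolding character_graph_def by blast
qed

lemma character_graph_extend:
  assumes R: "character_graph G R" and x: "x \<in> carrier G"
  obtains R' where "character_graph G R'" and "R \<subseteq> R'" and "x \<in> Domain R'"
proof -
  obtain z where z: "z \<in> carrier circle_group"
    and compatible: "\<And>j::int. x [^] j \<in> Domain R \<Longrightarrow> (x [^] j, z powi j) \<in> R"
    using character_graph_compatible_value[OF R x] by blast
  define R' where "R' = R <#>\<^bsub>G \<times>\<times> circle_group\<^esub> range (\<lambda>k::int. (x [^] k, z powi k))"
  have R'_iff: "p \<in> R' \<longleftrightarrow> (\<exists>a b k. (a, b) \<in> R \<and> p = (a \<otimes> x [^] k, b * z powi k))" for p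
    unfolding R'_def by (rule mem_set_mult_powers_iff)
  have "character_graph G R'"
    unfolding R'_def using R x z compatible by (rule character_graph_adjoin)
  moreover have "R \<subseteq> R'"
  proof
    fix p assume p: "p \<in> R"
    then obtain a b where ab: "p = (a, b)" "a \<in> carrier G"
      using character_graph_subset[OF R] by auto
    have "(a \<otimes> x [^] (0::int), b * z powi 0) \<in> R'"
      using R'_iff p ab(1) by blast
    then show "p \<in> R'"
      using ab by simp
  qed
  moreover have "(\<one> \<otimes> x [^] (1::int), 1 * z powi 1) \<in> R'"
    using R'_iff character_graph_one[OF R] by blast
  then have "x \<in> Domain R'"
    using x by auto
  ultimately show ?thesis
    by (rule that)
qed

lemma character_graph_maximal:
  assumes "character_graph G R"
  obtains M where "character_graph G M" and "R \<subseteq> M" and "Domain M = carrier G"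
proof -
  let ?A = "{S. character_graph G S \<and> R \<subseteq> S}"
  have "\<exists>M\<in>?A. \<forall>S\<in>?A. M \<subseteq> S \<longrightarrow> S = M"
  proof (rule subset_Zorn_nonempty)
    show "?A \<noteq> {}"
      using assms by blast
    fix \<C> assume \<C>: "\<C> \<noteq> {}" "subset.chain ?A \<C>"
    then have "subset.chain {S. character_graph G S} \<C>" and "\<And>S. S \<in> \<C> \<Longrightarrow> R \<subseteq> S"
      by (auto simp: subset_chain_def)
    then show "\<Union>\<C> \<in> ?A"
      using character_graph_Union_chain[OF \<C>(1)] \<C>(1) by blast
  qed
  then obtain M where "M \<in> ?A" and maximal: "\<forall>S\<in>?A. M \<subseteq> S \<longrightarrow> S = M" ..
  then have M: "character_graph G M" "R \<subseteq> M"
    by simp_all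
  have "carrier G \<subseteq> Domain M"
  proof
    fix x assume x: "x \<in> carrier G"
    obtain S where "character_graph G S" "M \<subseteq> S" "x \<in> Domain S"
      using character_graph_extend[OF M(1) x] .
    moreover have "S = M"
      using maximal M(2) calculation(1,2) by blast
    ultimately show "x \<in> Domain M"
      by simp
  qed
  moreover have "Domain M \<subseteq> carrier G"
    using character_graph_subset[OF M(1)] by auto
  ultimately have "Domain M = carrier G"
    by blast
  with M show ?thesis
    by (rule that)
qed

lemma character_graph_total_imp_hom:
  assumes M: "character_graph G M" and total: "Domain M = carrier G"
  obtains c where "c \<in> hom G circle_group" and "\<And>x z. (x, z) \<in> M \<Longrightarrow> c x = z"
proof -
  define c where "c x = (THE z. (x, z) \<in> M)" for x
  have c_eq: "c x = z" if "(x, z) \<in> M" for x z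
    unfolding c_def by (rule the_equality) (use that character_graph_unique[OF M] in auto)
  have c_mem: "(x, c x) \<in> M" if "x \<in> carrier G" for x
  proof -
    obtain z where "(x, z) \<in> M"
      using total \<open>x \<in> carrier G\<close> by blast
    then show ?thesis
      using c_eq by simp
  qed
  have "c \<in> hom G circle_group"
    unfolding hom_circle_group_iff
  proof (intro conjI ballI)
    fix x assume "x \<in> carrier G"
    then show "cmod (c x) = 1"
      using subsetD[OF character_graph_subset[OF M] c_mem] by simp
  next
    fix x y assume "x \<in> carrier G" "y \<in> carrier G"
    then have "(x \<otimes> y, c x * c y) \<in> M"
      by (intro character_graph_mult[OF M] c_mem)
    then show "c (x \<otimes> y) = c x * c y"
      by (rule c_eq)
  qed
  then show ?thesis
    using c_eq by (rule that)
qed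

lemma character_graph_extends_to_character:
  assumes "character_graph G R"
  obtains c where "c \<in> hom G circle_group" and "\<And>x z. (x, z) \<in> R \<Longrightarrow> c x = z"
proof -
  obtain M where M: "character_graph G M" "R \<subseteq> M" "Domain M = carrier G"
    using character_graph_maximal[OF assms] .
  show ?thesis
  proof (rule character_graph_total_imp_hom[OF M(1,3)])
    fix c assume c: "c \<in> hom G circle_group" and cM: "\<And>x z. (x, z) \<in> M \<Longrightarrow> c x = z"
    show thesis
    proof (rule that[OF c])
      fix x z assume "(x, z) \<in> R"
      then show "c x = z"
        using M(2) by (intro cM) blast
    qed
  qed
qed

lemma mem_set_mult_graph_iff:
  "p \<in> (\<lambda>u. (f u, \<psi> u)) ` carrier K <#>\<^bsub>G \<times>\<times> circle_group\<^esub> (H \<times> {1}) \<longleftrightarrow>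
    (\<exists>u y. u \<in> carrier K \<and> y \<in> H \<and> p = (f u \<otimes> y, \<psi> u))"
  by (auto simp: set_mult_def)

lemma character_graph_lift:
  assumes K: "group K" and H: "subgroup H G" and f: "f \<in> hom K G"
    and \<psi>: "\<psi> \<in> hom K circle_group"
    and kernel: "\<And>u. u \<in> carrier K \<Longrightarrow> f u \<in> H \<Longrightarrow> \<psi> u = 1"
  shows "character_graph G ((\<lambda>u. (f u, \<psi> u)) ` carrier K <#>\<^bsub>G \<times>\<times> circle_group\<^esub> (H \<times> {1}))"
    (is "character_graph G ?R")
proof -
  have "subgroup (H \<times> {1}) (G \<times>\<times> circle_group)"
    using DirProd_subgroups[OF is_group H group_circle_group group.triv_subgroup[OF group_circle_group]]
    by simp
  then have sub: "subgroup ?R (G \<times>\<times> circle_group)"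
    using comm_group.mult_subgroups[OF comm_group_DirProd_circle_group]
      subgroup_image_paired_hom[OF K is_group group_circle_group f \<psi>]
    by simp
  have "single_valued ?R"
  proof (rule single_valued_subgroup_DirProd[OF group_circle_group sub])
    fix w assume "(\<one>, w) \<in> ?R"
    then obtain u y where u: "u \<in> carrier K" and y: "y \<in> H" and "\<one> = f u \<otimes> y" and w: "w = \<psi> u"
      unfolding mem_set_mult_graph_iff by blast
    then have "inv y = f u"
      using inv_equality[of "f u" y] subgroup.mem_carrier[OF H] hom_in_carrier[OF f] by simp
    then have "f u \<in> H"
      using y subgroup.m_inv_closed[OF H, of y] by simp
    then show "w = \<one>\<^bsub>circle_group\<^esub>"
      using kernel u w by simp
  qed
  with sub show ?thesis
    unfolding character_graph_def by blast
qed

lemma character_lift: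
  assumes K: "group K" and H: "subgroup H G" and f: "f \<in> hom K G"
    and \<psi>: "\<psi> \<in> hom K circle_group"
    and kernel: "\<And>u. u \<in> carrier K \<Longrightarrow> f u \<in> H \<Longrightarrow> \<psi> u = 1"
  obtains c where "c \<in> hom G circle_group" and "\<And>y. y \<in> H \<Longrightarrow> c y = 1"
    and "\<And>u. u \<in> carrier K \<Longrightarrow> c (f u) = \<psi> u"
proof -
  let ?R = "(\<lambda>u. (f u, \<psi> u)) ` carrier K <#>\<^bsub>G \<times>\<times> circle_group\<^esub> (H \<times> {1})"
  obtain c where c: "c \<in> hom G circle_group" and cR: "\<And>x z. (x, z) \<in> ?R \<Longrightarrow> c x = z"
    using character_graph_extends_to_character[OF character_graph_lift[OF assms]] by blast
  have trivial: "c y = 1" if "y \<in> H" for y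
  proof -
    have "(f \<one>\<^bsub>K\<^esub> \<otimes> y, \<psi> \<one>\<^bsub>K\<^esub>) \<in> ?R"
      unfolding mem_set_mult_graph_iff using that monoid.one_closed[OF group.is_monoid[OF K]] by blast
    then have "c (f \<one>\<^bsub>K\<^esub> \<otimes> y) = \<psi> \<one>\<^bsub>K\<^esub>"
      by (rule cR)
    then show ?thesis
      using that subgroup.mem_carrier[OF H] hom_one[OF f K is_group] hom_one[OF \<psi> K group_circle_group]
      by simp
  qed
  have lift: "c (f u) = \<psi> u" if "u \<in> carrier K" for u
  proof -
    have "(f u \<otimes> \<one>, \<psi> u) \<in> ?R"
      unfolding mem_set_mult_graph_iff using that subgroup.one_closed[OF H] by blast
    then have "c (f u \<otimes> \<one>) = \<psi> u"
      by (rule cR)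
    then show ?thesis
      using that hom_in_carrier[OF f] by simp
  qed
  from c trivial lift show ?thesis
    by (rule that)
qed

lemma character_FactGroup:
  assumes H: "subgroup H G" and c: "c \<in> hom G circle_group" and trivial: "\<And>y. y \<in> H \<Longrightarrow> c y = 1"
  obtains c' where "c' \<in> hom (G Mod H) circle_group" and "\<And>x. x \<in> carrier G \<Longrightarrow> c' (H #> x) = c x"
proof -
  interpret N: normal H G
    using H by (rule subgroup_imp_normal)
  have coset: "c ` (H #> x) = {c x}" if x: "x \<in> carrier G" for x
  proof -
    have "c ` (H #> x) = (\<lambda>y. c (y \<otimes> x)) ` H"
      by (auto simp: r_coset_def)
    also have "\<dots> = (\<lambda>y. c x) ` H"
      using hom_mult[OF c subgroup.mem_carrier[OF H] x] trivial by (intro image_cong) simp_all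
    also have "\<dots> = {c x}"
      using subgroup.one_closed[OF H] by blast
    finally show ?thesis .
  qed
  define c' where "c' C = the_elem (c ` C)" for C
  have c'_coset: "c' (H #> x) = c x" if "x \<in> carrier G" for x
    using coset[OF that] by (simp add: c'_def)
  have "c' \<in> hom (G Mod H) circle_group"
    unfolding hom_circle_group_iff
  proof (intro conjI ballI)
    fix C assume "C \<in> carrier (G Mod H)"
    then obtain x where "x \<in> carrier G" "C = H #> x"
      by (auto simp: carrier_FactGroup)
    then show "cmod (c' C) = 1"
      using c'_coset hom_in_carrier[OF c] by simp
  next
    fix C D assume "C \<in> carrier (G Mod H)" "D \<in> carrier (G Mod H)"
    then obtain x y where x: "x \<in> carrier G" "C = H #> x" and y: "y \<in> carrier G" "D = H #> y"
      by (auto simp: carrier_FactGroup)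
    then have "C \<otimes>\<^bsub>G Mod H\<^esub> D = H #> (x \<otimes> y)"
      by (simp add: N.rcos_sum)
    then show "c' (C \<otimes>\<^bsub>G Mod H\<^esub> D) = c' C * c' D"
      using x y c'_coset hom_mult[OF c] by simp
  qed
  then show ?thesis
    using c'_coset by (rule that)
qed

end

section \<open>Relations among the elements of a subset\<close>

lemma hom_free_Abelian_group_diff:
  assumes "group K" and "f \<in> hom (free_Abelian_group S) K"
    and "Poly_Mapping.keys u \<subseteq> S" and "Poly_Mapping.keys v \<subseteq> S"
  shows "f (u - v) = f u \<otimes>\<^bsub>K\<^esub> inv\<^bsub>K\<^esub> f v"
proof -
  interpret f: group_hom "free_Abelian_group S" K f
    using assms(1,2) by (simp add: group_hom_def group_hom_axioms_def)
  have "f (u - v) = f (u \<otimes>\<^bsub>free_Abelian_group S\<^esub> inv\<^bsub>free_Abelian_group S\<^esub> v)"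
    using assms(4) by simp
  also have "\<dots> = f u \<otimes>\<^bsub>K\<^esub> f (inv\<^bsub>free_Abelian_group S\<^esub> v)"
    using assms(3,4) by (intro f.hom_mult) auto
  also have "\<dots> = f u \<otimes>\<^bsub>K\<^esub> inv\<^bsub>K\<^esub> f v"
    using assms(4) by (subst f.hom_inv) auto
  finally show ?thesis .
qed

lemma hom_free_Abelian_group_frag_cmul:
  assumes "group K" and "f \<in> hom (free_Abelian_group S) K" and "Poly_Mapping.keys u \<subseteq> S"
  shows "f (frag_cmul k u) = f u [^]\<^bsub>K\<^esub> k"
  using hom_int_pow[OF assms(2) _ group_free_Abelian_group assms(1), of u k] assms(3) by simp

lemma hom_free_Abelian_group_eqI:
  assumes "group K" and "f \<in> hom (free_Abelian_group S) K" and "g \<in> hom (free_Abelian_group S) K"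
    and "\<And>x. x \<in> S \<Longrightarrow> f (frag_of x) = g (frag_of x)"
    and "u \<in> carrier (free_Abelian_group S)"
  shows "f u = g u"
proof -
  have "Poly_Mapping.keys u \<subseteq> S"
    using assms(5) by simp
  then have "Poly_Mapping.keys u \<subseteq> S \<and> f u = g u"
  proof (induction u rule: frag_induction)
    case zero
    show ?case
      using hom_one[OF assms(2) group_free_Abelian_group assms(1)]
        hom_one[OF assms(3) group_free_Abelian_group assms(1)] by simp
  next
    case (one x)
    then show ?case
      using assms(4) by (simp add: keys_frag_of)
  next
    case (diff a b)
    then show ?case
      using hom_free_Abelian_group_diff[OF assms(1,2)] hom_free_Abelian_group_diff[OF assms(1,3)]
      by (auto dest: subsetD[OF keys_diff])
  qed
  then show ?thesis
    by blast
qed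

lemma hom_free_Abelian_group_power_eq_1:
  assumes \<psi>: "\<psi> \<in> hom (free_Abelian_group S) circle_group"
    and gen: "\<And>x. x \<in> S \<Longrightarrow> \<psi> (frag_of x) ^ M = 1"
    and u: "u \<in> carrier (free_Abelian_group S)"
  shows "\<psi> u ^ M = 1"
proof -
  have "(\<lambda>v. \<psi> v ^ M) \<in> hom (free_Abelian_group S) circle_group"
    using \<psi> by (simp add: hom_circle_group_iff norm_power power_mult_distrib)
  moreover have "(\<lambda>v. 1) \<in> hom (free_Abelian_group S) circle_group"
    by (simp add: hom_circle_group_iff)
  ultimately have "(\<lambda>v. \<psi> v ^ M) u = (\<lambda>v. 1) u"
    using gen u by (rule hom_free_Abelian_group_eqI[OF group_circle_group]) auto
  then show ?thesis
    by simp
qed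

lemma frag_cmul_div:
  assumes "\<And>x. c dvd poly_mapping.lookup u x"
  obtains v where "u = frag_cmul c v" and "Poly_Mapping.keys v \<subseteq> Poly_Mapping.keys u"
proof
  let ?v = "Poly_Mapping.mapp (\<lambda>_ n. n div c) u"
  show "Poly_Mapping.keys ?v \<subseteq> Poly_Mapping.keys u"
    by (rule keys_mapp_subset)
  show "u = frag_cmul c ?v"
    using assms by (intro poly_mapping_eqI) (auto simp: lookup_mapp when_def in_keys_iff)
qed

definition M_PR_mod :: "('a, 'b) monoid_scheme \<Rightarrow> nat \<Rightarrow> 'a set \<Rightarrow> 'a set \<Rightarrow> bool" where
  "M_PR_mod G M H E \<longleftrightarrow>
     (\<forall>\<phi> \<in> E \<rightarrow> roots_of_unity M.
        \<exists>c \<in> hom G circle_group. (\<forall>y\<in>H. c y = 1) \<and> (\<forall>x\<in>E. c x = \<phi> x))"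

text \<open>Here \<open>h\<close> is meant to be the evaluation map \<open>u \<mapsto> \<Prod>x\<in>E. x ^ u x\<close> of the free abelian
  group on \<open>E\<close> (locale \<open>free_Abelian_evaluation\<close> below), so the condition says that every
  relation among the elements of \<open>E\<close> modulo \<open>H\<close> has all its coefficients divisible by \<open>M\<close>.\<close>
definition relations_divisible :: "(('a \<Rightarrow>\<^sub>0 int) \<Rightarrow> 'g) \<Rightarrow> 'a set \<Rightarrow> 'g set \<Rightarrow> nat \<Rightarrow> bool" where
  "relations_divisible h E H M \<longleftrightarrow>
     (\<forall>u \<in> carrier (free_Abelian_group E). h u \<in> H \<longrightarrow> (\<forall>x. int M dvd poly_mapping.lookup u x))"

lemma relations_divisible_prod_iff:
  fixes q :: "'i \<Rightarrow> nat"
  assumes "finite I" and "\<And>i j. i \<in> I \<Longrightarrow> j \<in> I \<Longrightarrow> i \<noteq> j \<Longrightarrow> coprime (q i) (q j)"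
  shows "relations_divisible h E H (\<Prod>i\<in>I. q i) \<longleftrightarrow> (\<forall>i\<in>I. relations_divisible h E H (q i))"
proof -
  have "int (\<Prod>i\<in>I. q i) dvd a \<longleftrightarrow> (\<forall>i\<in>I. int (q i) dvd a)" for a :: int
  proof
    assume "int (\<Prod>i\<in>I. q i) dvd a"
    moreover have "int (q i) dvd int (\<Prod>i\<in>I. q i)" if "i \<in> I" for i
      unfolding int_dvd_int_iff using assms(1) that by (rule dvd_prodI)
    ultimately show "\<forall>i\<in>I. int (q i) dvd a"
      using dvd_trans by blast
  next
    assume "\<forall>i\<in>I. int (q i) dvd a"
    then have "[a = 0] (mod (\<Prod>i\<in>I. int (q i)))"
      using assms(2) by (intro cong_cong_prod_coprime) (auto simp: cong_0_iff)
    then show "int (\<Prod>i\<in>I. q i) dvd a"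
      by (simp add: cong_0_iff)
  qed
  then show ?thesis
    unfolding relations_divisible_def by blast
qed

lemma (in group) M_PR_iff_M_PR_mod_one: "M_PR G M E \<longleftrightarrow> M_PR_mod G M {\<one>} E"
  unfolding M_PR_def M_PR_mod_def using hom_one[OF _ is_group group_circle_group] by auto

locale free_Abelian_evaluation = comm_group G for G (structure) +
  fixes E :: "'a set" and h :: "('a \<Rightarrow>\<^sub>0 int) \<Rightarrow> 'a"
  assumes evaluation_hom: "h \<in> hom (free_Abelian_group E) G"
    and evaluation_frag_of: "\<And>x. x \<in> E \<Longrightarrow> h (frag_of x) = x"
begin

lemma generators_subset: "E \<subseteq> carrier G"
proof
  fix x assume "x \<in> E"
  then have "h (frag_of x) \<in> carrier G"
    by (intro hom_in_carrier[OF evaluation_hom]) simp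
  then show "x \<in> carrier G"
    using \<open>x \<in> E\<close> evaluation_frag_of by simp
qed

lemma M_PR_mod_imp_relations_divisible:
  assumes "M > 0" and "M_PR_mod G M H E"
  shows "relations_divisible h E H M"
  unfolding relations_divisible_def
proof (intro ballI impI allI)
  fix u and g :: 'a
  assume u: "u \<in> carrier (free_Abelian_group E)" and "h u \<in> H"
  obtain \<omega> :: complex where \<omega>: "\<omega> ^ M = 1" "\<And>j::int. \<omega> powi j = 1 \<Longrightarrow> int M dvd j"
    using primitive_root_of_unity[OF assms(1)] by blast
  have "cmod \<omega> = 1"
    using \<omega>(1) roots_of_unity_subset_circle_group[OF assms(1)] by (auto simp: roots_of_unity_def)
  then have "\<omega> \<noteq> 0"
    by auto
  define \<theta> where "\<theta> v = \<omega> powi poly_mapping.lookup v g" for v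
  have \<theta>: "\<theta> \<in> hom (free_Abelian_group E) circle_group"
    using \<open>cmod \<omega> = 1\<close> \<open>\<omega> \<noteq> 0\<close> unfolding hom_circle_group_iff \<theta>_def
    by (auto simp: norm_power_int lookup_add power_int_add)
  have \<theta>_roots: "(\<lambda>x. \<theta> (frag_of x)) \<in> E \<rightarrow> roots_of_unity M"
    using \<omega>(1) by (simp add: \<theta>_def roots_of_unity_def)
  obtain c where c: "c \<in> hom G circle_group" "\<forall>y\<in>H. c y = 1" "\<forall>x\<in>E. c x = \<theta> (frag_of x)"
    using assms(2)[unfolded M_PR_mod_def, rule_format, OF \<theta>_roots] by blast
  have "c \<circ> h \<in> hom (free_Abelian_group E) circle_group"
    using evaluation_hom c(1) by (rule Group.hom_compose)
  then have "c (h u) = \<theta> u"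
    using hom_free_Abelian_group_eqI[OF group_circle_group _ \<theta> _ u] c(3) evaluation_frag_of by simp
  then show "int M dvd poly_mapping.lookup u g"
    using \<open>h u \<in> H\<close> c(2) \<omega>(2) by (simp add: \<theta>_def)
qed

lemma relations_divisible_imp_M_PR_mod:
  assumes H: "subgroup H G" and "M > 0" and R: "relations_divisible h E H M"
  shows "M_PR_mod G M H E"
  unfolding M_PR_mod_def
proof
  fix \<phi> assume \<phi>: "\<phi> \<in> E \<rightarrow> roots_of_unity M"
  then have "\<phi> ` E \<subseteq> carrier circle_group"
    using roots_of_unity_subset_circle_group[OF \<open>M > 0\<close>] by auto
  then obtain \<psi> where \<psi>: "\<psi> \<in> hom (free_Abelian_group E) circle_group"
    and \<psi>_frag_of: "\<And>x. x \<in> E \<Longrightarrow> \<psi> (frag_of x) = \<phi> x"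
    using comm_group.free_Abelian_group_universal[OF comm_group_circle_group] by blast
  have \<psi>_pow: "\<psi> v ^ M = 1" if "v \<in> carrier (free_Abelian_group E)" for v
    using \<psi> _ that
  proof (rule hom_free_Abelian_group_power_eq_1)
    show "\<psi> (frag_of x) ^ M = 1" if "x \<in> E" for x
      using \<psi>_frag_of \<phi> that by (auto simp: roots_of_unity_def)
  qed
  have "\<psi> u = 1" if u: "u \<in> carrier (free_Abelian_group E)" and "h u \<in> H" for u
  proof -
    have "\<forall>x. int M dvd poly_mapping.lookup u x"
      using R u \<open>h u \<in> H\<close> unfolding relations_divisible_def by blast
    then obtain v where v: "u = frag_cmul (int M) v" "Poly_Mapping.keys v \<subseteq> Poly_Mapping.keys u"
      using frag_cmul_div by blast
    then have "v \<in> carrier (free_Abelian_group E)"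
      using u by auto
    then show ?thesis
      using v(1) \<psi>_pow hom_free_Abelian_group_frag_cmul[OF group_circle_group \<psi>, of v "int M"]
      by (simp add: int_pow_int nat_pow_circle_group)
  qed
  then obtain c where c: "c \<in> hom G circle_group" "\<And>y. y \<in> H \<Longrightarrow> c y = 1"
    and c_h: "\<And>u. u \<in> carrier (free_Abelian_group E) \<Longrightarrow> c (h u) = \<psi> u"
    using character_lift[OF group_free_Abelian_group H evaluation_hom \<psi>] by blast
  have "c x = \<phi> x" if "x \<in> E" for x
    using c_h[of "frag_of x"] that evaluation_frag_of \<psi>_frag_of by simp
  then show "\<exists>c\<in>hom G circle_group. (\<forall>y\<in>H. c y = 1) \<and> (\<forall>x\<in>E. c x = \<phi> x)"
    using c by blast
qed

lemma M_PR_mod_iff_relations_divisible: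
  assumes "subgroup H G" and "M > 0"
  shows "M_PR_mod G M H E \<longleftrightarrow> relations_divisible h E H M"
  using assms M_PR_mod_imp_relations_divisible relations_divisible_imp_M_PR_mod by blast

end

section \<open>Prime powers and quotients\<close>

lemma prime_power_not_dvd_imp_dvd:
  fixes p d :: nat
  assumes p: "Factorial_Ring.prime p" and "d \<noteq> 0" and "\<not> p ^ m dvd d"
  obtains t where "\<not> p dvd t" and "d dvd t * p ^ (m - 1)"
proof -
  define k where "k = multiplicity p d"
  obtain t where t: "d = p ^ k * t" "\<not> p dvd t"
    unfolding k_def using multiplicity_decompose'[of d p] assms not_prime_unit by blast
  have "k < m"
  proof (rule ccontr)
    assume "\<not> k < m"
    then have "p ^ m dvd p ^ k"
      by (simp add: le_imp_power_dvd)
    moreover have "p ^ k dvd d"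
      unfolding t(1) by simp
    ultimately show False
      using assms(3) dvd_trans by blast
  qed
  then have "p ^ k dvd p ^ (m - 1)"
    by (simp add: le_imp_power_dvd)
  then have "d dvd t * p ^ (m - 1)"
    unfolding t(1) by (simp add: mult.commute mult_dvd_mono)
  with t(2) show ?thesis
    by (rule that)
qed

lemma dvd_imp_prime_power_not_dvd:
  fixes p d :: nat
  assumes p: "Factorial_Ring.prime p" and m: "m \<ge> 1"
    and t: "\<not> p dvd t" and d: "d dvd t * p ^ (m - 1)"
  shows "d \<noteq> 0" and "\<not> p ^ m dvd d"
proof -
  have "p > 0"
    using p prime_gt_0_nat by blast
  have "t \<noteq> 0"
    using t by (rule contrapos_nn) simp
  then have "t * p ^ (m - 1) \<noteq> 0"
    using \<open>p > 0\<close> by simp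
  then show "d \<noteq> 0"
    using d by (cases "d = 0") auto
  show "\<not> p ^ m dvd d"
  proof
    assume "p ^ m dvd d"
    then have "p ^ m dvd t * p ^ (m - 1)"
      using d by (rule dvd_trans)
    moreover have "p ^ m = p ^ (m - 1) * p"
      using m by (cases m) (simp_all add: mult.commute)
    ultimately have "p ^ (m - 1) * p dvd p ^ (m - 1) * t"
      by (simp add: mult.commute)
    then show False
      using t \<open>p > 0\<close> by simp
  qed
qed

lemma (in group) Gamma_pm_iff_ord:
  "x \<in> Gamma_pm G p m \<longleftrightarrow> x \<in> carrier G \<and> ord x \<noteq> 0 \<and> \<not> p ^ m dvd ord x"
  by (auto simp: Gamma_pm_def torsion_subgroup_def)

lemma (in group) Gamma_pm_iff:
  assumes "Factorial_Ring.prime p" and "m \<ge> 1"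
  shows "x \<in> Gamma_pm G p m \<longleftrightarrow> x \<in> carrier G \<and> (\<exists>t. \<not> p dvd t \<and> x [^] (t * p ^ (m - 1)) = \<one>)"
proof -
  have "ord x \<noteq> 0 \<and> \<not> p ^ m dvd ord x \<longleftrightarrow> (\<exists>t. \<not> p dvd t \<and> ord x dvd t * p ^ (m - 1))"
  proof
    assume "ord x \<noteq> 0 \<and> \<not> p ^ m dvd ord x"
    then obtain t where "\<not> p dvd t" "ord x dvd t * p ^ (m - 1)"
      using prime_power_not_dvd_imp_dvd[OF assms(1)] by blast
    then show "\<exists>t. \<not> p dvd t \<and> ord x dvd t * p ^ (m - 1)"
      by blast
  next
    assume "\<exists>t. \<not> p dvd t \<and> ord x dvd t * p ^ (m - 1)"
    then show "ord x \<noteq> 0 \<and> \<not> p ^ m dvd ord x"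
      using dvd_imp_prime_power_not_dvd[OF assms] by blast
  qed
  then show ?thesis
    by (auto simp: Gamma_pm_iff_ord pow_eq_id)
qed

lemma (in comm_group) Gamma_pm_subgroup:
  assumes p: "Factorial_Ring.prime p" and m: "m \<ge> 1"
  shows "subgroup (Gamma_pm G p m) G"
proof (rule subgroupI)
  note mem = Gamma_pm_iff[OF assms]
  show "Gamma_pm G p m \<subseteq> carrier G"
    using mem by blast
  have "\<not> p dvd 1"
    using prime_gt_1_nat[OF p] by simp
  then have "\<one> \<in> Gamma_pm G p m"
    unfolding mem by (metis nat_pow_one one_closed)
  then show "Gamma_pm G p m \<noteq> {}"
    by blast
next
  fix a assume "a \<in> Gamma_pm G p m"
  then obtain t where a: "a \<in> carrier G" "\<not> p dvd t" "a [^] (t * p ^ (m - 1)) = \<one>"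
    unfolding Gamma_pm_iff[OF p m] by blast
  then have "inv a [^] (t * p ^ (m - 1)) = \<one>"
    by (simp add: nat_pow_inv)
  then show "inv a \<in> Gamma_pm G p m"
    unfolding Gamma_pm_iff[OF p m] using a by blast
next
  fix a b assume "a \<in> Gamma_pm G p m" "b \<in> Gamma_pm G p m"
  then obtain t s where a: "a \<in> carrier G" "\<not> p dvd t" "a [^] (t * p ^ (m - 1)) = \<one>"
    and b: "b \<in> carrier G" "\<not> p dvd s" "b [^] (s * p ^ (m - 1)) = \<one>"
    unfolding Gamma_pm_iff[OF p m] by blast
  have "a [^] (t * s * p ^ (m - 1)) = (a [^] (t * p ^ (m - 1))) [^] s"
    and "b [^] (t * s * p ^ (m - 1)) = (b [^] (s * p ^ (m - 1))) [^] t"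
    using a(1) b(1) by (simp_all add: nat_pow_pow mult_ac)
  then have "(a \<otimes> b) [^] (t * s * p ^ (m - 1)) = \<one>"
    using a b by (simp add: nat_pow_distrib)
  moreover have "\<not> p dvd t * s"
    using a(2) b(2) p by (simp add: prime_dvd_mult_iff)
  ultimately show "a \<otimes> b \<in> Gamma_pm G p m"
    unfolding Gamma_pm_iff[OF p m] using a(1) b(1) by blast
qed

context comm_group
begin

lemma M_PR_mod_imp_M_PR_FactGroup:
  assumes H: "subgroup H G" and E: "E \<subseteq> carrier G" and P: "M_PR_mod G M H E"
  shows "M_PR (G Mod H) M ((\<lambda>x. H #> x) ` E)"
  unfolding M_PR_def
proof
  fix \<phi> assume "\<phi> \<in> (\<lambda>x. H #> x) ` E \<rightarrow> roots_of_unity M"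
  then have \<phi>: "(\<lambda>x. \<phi> (H #> x)) \<in> E \<rightarrow> roots_of_unity M"
    by auto
  obtain c where c: "c \<in> hom G circle_group" "\<forall>y\<in>H. c y = 1" "\<forall>x\<in>E. c x = \<phi> (H #> x)"
    using P[unfolded M_PR_mod_def, rule_format, OF \<phi>] by blast
  obtain c' where c': "c' \<in> hom (G Mod H) circle_group" and c'_coset: "\<And>x. x \<in> carrier G \<Longrightarrow> c' (H #> x) = c x"
    using character_FactGroup[OF H c(1)] c(2) by blast
  have "\<forall>C\<in>(\<lambda>x. H #> x) ` E. c' C = \<phi> C"
    using c'_coset c(3) E by auto
  with c' show "\<exists>c\<in>hom (G Mod H) circle_group. \<forall>C\<in>(\<lambda>x. H #> x) ` E. c C = \<phi> C"
    by blast
qed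

lemma M_PR_FactGroup_imp_M_PR_mod:
  assumes H: "subgroup H G" and inj: "inj_on (\<lambda>x. H #> x) E"
    and P: "M_PR (G Mod H) M ((\<lambda>x. H #> x) ` E)"
  shows "M_PR_mod G M H E"
  unfolding M_PR_mod_def
proof
  fix \<phi> assume \<phi>: "\<phi> \<in> E \<rightarrow> roots_of_unity M"
  define \<psi> where "\<psi> C = \<phi> (the_inv_into E (\<lambda>x. H #> x) C)" for C
  have \<psi>_coset: "\<psi> (H #> x) = \<phi> x" if "x \<in> E" for x
    unfolding \<psi>_def using the_inv_into_f_f[OF inj that] by simp
  then have "\<psi> \<in> (\<lambda>x. H #> x) ` E \<rightarrow> roots_of_unity M"
    using \<phi> by auto
  then obtain c' where c': "c' \<in> hom (G Mod H) circle_group" "\<forall>C\<in>(\<lambda>x. H #> x) ` E. c' C = \<psi> C"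
    using P unfolding M_PR_def by blast
  interpret N: normal H G
    using H by (rule subgroup_imp_normal)
  have "c' \<circ> (\<lambda>x. H #> x) \<in> hom G circle_group"
    using N.r_coset_hom_Mod c'(1) by (rule Group.hom_compose)
  moreover have "(c' \<circ> (\<lambda>x. H #> x)) y = 1" if "y \<in> H" for y
    using N.rcos_const[OF is_group that] hom_one[OF c'(1) N.factorgroup_is_group group_circle_group]
    by simp
  moreover have "(c' \<circ> (\<lambda>x. H #> x)) x = \<phi> x" if "x \<in> E" for x
    using c'(2) \<psi>_coset that by simp
  ultimately show "\<exists>c\<in>hom G circle_group. (\<forall>y\<in>H. c y = 1) \<and> (\<forall>x\<in>E. c x = \<phi> x)"
    by (intro bexI[of _ "c' \<circ> (\<lambda>x. H #> x)"] conjI ballI)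
qed

end

context free_Abelian_evaluation
begin

lemma relations_divisible_Gamma_pm_of_prime_power:
  assumes p: "Factorial_Ring.prime p" and R: "relations_divisible h E {\<one>} (p ^ m)"
  shows "relations_divisible h E (Gamma_pm G p m) p"
  unfolding relations_divisible_def
proof (intro ballI impI allI)
  fix u and g :: 'a
  assume u: "u \<in> carrier (free_Abelian_group E)" and "h u \<in> Gamma_pm G p m"
  then have hu: "h u \<in> carrier G" "\<not> p ^ m dvd ord (h u)"
    by (auto simp: Gamma_pm_iff_ord)
  let ?d = "int (ord (h u))"
  have "frag_cmul ?d u \<in> carrier (free_Abelian_group E)"
    using u keys_cmul by auto
  moreover have "h (frag_cmul ?d u) = \<one>"
    using hom_free_Abelian_group_frag_cmul[OF is_group evaluation_hom] u hu(1)
    by (simp add: int_pow_int)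
  ultimately have "int (p ^ m) dvd ?d * poly_mapping.lookup u g"
    using R unfolding relations_divisible_def by fastforce
  show "int p dvd poly_mapping.lookup u g"
  proof (rule ccontr)
    assume "\<not> int p dvd poly_mapping.lookup u g"
    then have "coprime (int p) (poly_mapping.lookup u g)"
      using p by (intro prime_imp_coprime) simp_all
    then have "int (p ^ m) dvd ?d"
      using \<open>int (p ^ m) dvd ?d * poly_mapping.lookup u g\<close> by (simp add: coprime_dvd_mult_left_iff)
    then show False
      using hu(2) by (simp only: int_dvd_int_iff)
  qed
qed

lemma relations_divisible_Gamma_pm_step:
  assumes p: "Factorial_Ring.prime p" and R: "relations_divisible h E (Gamma_pm G p m) p"
    and "j < m" and u: "u \<in> carrier (free_Abelian_group E)" and "h u = \<one>"
    and dvd: "\<forall>x. int (p ^ j) dvd poly_mapping.lookup u x"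
  shows "\<forall>x. int (p ^ Suc j) dvd poly_mapping.lookup u x"
proof -
  obtain v where v: "u = frag_cmul (int (p ^ j)) v" "Poly_Mapping.keys v \<subseteq> Poly_Mapping.keys u"
    using frag_cmul_div dvd by blast
  have vE: "v \<in> carrier (free_Abelian_group E)"
    using u v(2) by auto
  then have hv: "h v \<in> carrier G"
    by (rule hom_in_carrier[OF evaluation_hom])
  have "h v [^] (p ^ j) = \<one>"
    using hom_free_Abelian_group_frag_cmul[OF is_group evaluation_hom, of v "int (p ^ j)"] vE v(1)
      \<open>h u = \<one>\<close> by (simp add: int_pow_int flip: of_nat_power)
  then have ord: "ord (h v) dvd p ^ j"
    using hv by (simp add: pow_eq_id)
  have "p > 1"
    using p prime_gt_1_nat by blast
  then have "ord (h v) \<noteq> 0"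
    using ord by (metis dvd_0_left_iff not_one_less_zero power_eq_0_iff)
  moreover have "\<not> p ^ m dvd ord (h v)"
    using ord \<open>j < m\<close> \<open>p > 1\<close> by (metis dvd_trans not_le power_dvd_imp_le)
  ultimately have "h v \<in> Gamma_pm G p m"
    using hv by (simp add: Gamma_pm_iff_ord)
  then have "\<forall>x. int p dvd poly_mapping.lookup v x"
    using R vE unfolding relations_divisible_def by blast
  then show ?thesis
    using v(1) by (simp add: mult_dvd_mono mult.commute)
qed

lemma relations_divisible_prime_power_of_Gamma_pm:
  assumes p: "Factorial_Ring.prime p" and R: "relations_divisible h E (Gamma_pm G p m) p"
  shows "relations_divisible h E {\<one>} (p ^ m)"
  unfolding relations_divisible_def
proof (intro ballI impI)
  fix u assume u: "u \<in> carrier (free_Abelian_group E)" and "h u \<in> {\<one>}"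
  have "\<forall>x. int (p ^ j) dvd poly_mapping.lookup u x" if "j \<le> m" for j
    using that
  proof (induction j)
    case 0
    then show ?case
      by simp
  next
    case (Suc j)
    then show ?case
      using relations_divisible_Gamma_pm_step[OF p R _ u] \<open>h u \<in> {\<one>}\<close> by simp
  qed
  then show "\<forall>x. int (p ^ m) dvd poly_mapping.lookup u x"
    by simp
qed

lemma relations_divisible_prime_power_iff:
  assumes "Factorial_Ring.prime p"
  shows "relations_divisible h E {\<one>} (p ^ m) \<longleftrightarrow> relations_divisible h E (Gamma_pm G p m) p"
  using assms relations_divisible_Gamma_pm_of_prime_power relations_divisible_prime_power_of_Gamma_pm
  by blast

lemma relations_divisible_imp_inj_on:
  assumes H: "subgroup H G" and "p \<noteq> 1" and R: "relations_divisible h E H p"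
  shows "inj_on (\<lambda>x. H #> x) E"
proof (rule inj_onI, rule ccontr)
  fix x y assume x: "x \<in> E" and y: "y \<in> E" and eq: "H #> x = H #> y" and "x \<noteq> y"
  have xy: "x \<in> carrier G" "y \<in> carrier G"
    using generators_subset x y by auto
  let ?u = "frag_of x - frag_of y"
  have "?u \<in> carrier (free_Abelian_group E)"
    using keys_diff[of "frag_of x" "frag_of y"] x y by (auto simp: keys_frag_of)
  moreover have "h ?u = x \<otimes> inv y"
    using hom_free_Abelian_group_diff[OF is_group evaluation_hom] x y evaluation_frag_of
    by (simp add: keys_frag_of)
  moreover have "x \<otimes> inv y \<in> H"
    using subgroup.rcos_module_imp[OF H is_group xy(2)] rcos_self[OF xy(1) H] eq by simp
  ultimately have "int p dvd poly_mapping.lookup ?u x"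
    using R unfolding relations_divisible_def by auto
  then have "int p dvd int 1"
    using \<open>x \<noteq> y\<close> by (simp add: lookup_minus)
  then show False
    using \<open>p \<noteq> 1\<close> by (simp only: int_dvd_int_iff nat_dvd_1_iff_1)
qed

lemma relations_divisible_iff_M_PR_FactGroup:
  assumes H: "subgroup H G" and "p > 1"
  shows "relations_divisible h E H p \<longleftrightarrow>
    inj_on (\<lambda>x. H #> x) E \<and> M_PR (G Mod H) p ((\<lambda>x. H #> x) ` E)"
proof -
  have "relations_divisible h E H p \<longleftrightarrow> M_PR_mod G p H E"
    using M_PR_mod_iff_relations_divisible[OF H] assms(2) by simp
  then show ?thesis
    using relations_divisible_imp_inj_on[OF H] M_PR_mod_imp_M_PR_FactGroup[OF H generators_subset]
      M_PR_FactGroup_imp_M_PR_mod[OF H] assms(2)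
    by (metis less_irrefl)
qed

lemma relations_divisible_prime_power_iff_pi_pm:
  assumes "Factorial_Ring.prime p" and "m \<ge> 1"
  shows "relations_divisible h E {\<one>} (p ^ m) \<longleftrightarrow>
    inj_on (pi_pm G p m) E \<and> M_PR (G Mod Gamma_pm G p m) p (pi_pm G p m ` E)"
proof -
  have "pi_pm G p m = (\<lambda>x. Gamma_pm G p m #> x)"
    by (simp add: fun_eq_iff pi_pm_def)
  then show ?thesis
    using relations_divisible_prime_power_iff[OF assms(1)]
      relations_divisible_iff_M_PR_FactGroup[OF Gamma_pm_subgroup[OF assms] prime_gt_1_nat[OF assms(1)]]
    by simp
qed

end

theorem corollary3p4:
  fixes \<Gamma> :: "('a, 'b) monoid_scheme"
    and N k :: nat and p n :: "nat \<Rightarrow> nat" and E :: "'a set"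
  assumes "comm_group \<Gamma>"
    and "\<forall>i\<in>{1..k}. Factorial_Ring.prime (p i)"
    and "inj_on p {1..k}"
    and "\<forall>i\<in>{1..k}. n i \<ge> 1"
    and "N = (\<Prod>i=1..k. p i ^ n i)"
    and "E \<subseteq> carrier \<Gamma>"
  shows "M_PR \<Gamma> N E \<longleftrightarrow>
    (\<forall>i\<in>{1..k}. inj_on (pi_pm \<Gamma> (p i) (n i)) E \<and>
       M_PR (\<Gamma> Mod Gamma_pm \<Gamma> (p i) (n i)) (p i) (pi_pm \<Gamma> (p i) (n i) ` E))"
proof -
  interpret comm_group \<Gamma>
    by fact
  obtain h where "h \<in> hom (free_Abelian_group E) \<Gamma>" "\<And>x. x \<in> E \<Longrightarrow> h (frag_of x) = x"
    using free_Abelian_group_universal[of id E] assms(6) by auto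
  then interpret free_Abelian_evaluation \<Gamma> E h
    by unfold_locales
  have prime: "Factorial_Ring.prime (p i)" if "i \<in> {1..k}" for i
    using assms(2) that by blast
  have coprime: "coprime (p i ^ n i) (p j ^ n j)" if "i \<in> {1..k}" "j \<in> {1..k}" "i \<noteq> j" for i j
    using primes_coprime[OF prime prime] assms(3) that by (simp add: inj_on_eq_iff)
  have "N > 0"
    unfolding assms(5) using prime by (simp add: prime_gt_0_nat)
  have "M_PR \<Gamma> N E \<longleftrightarrow> relations_divisible h E {\<one>\<^bsub>\<Gamma>\<^esub>} N"
    using M_PR_iff_M_PR_mod_one M_PR_mod_iff_relations_divisible[OF triv_subgroup \<open>N > 0\<close>] by simp
  also have "\<dots> \<longleftrightarrow> (\<forall>i\<in>{1..k}. relations_divisible h E {\<one>\<^bsub>\<Gamma>\<^esub>} (p i ^ n i))"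
    unfolding assms(5) using coprime by (intro relations_divisible_prod_iff) auto
  also have "\<dots> \<longleftrightarrow> (\<forall>i\<in>{1..k}. inj_on (pi_pm \<Gamma> (p i) (n i)) E \<and>
       M_PR (\<Gamma> Mod Gamma_pm \<Gamma> (p i) (n i)) (p i) (pi_pm \<Gamma> (p i) (n i) ` E))"
    using relations_divisible_prime_power_iff_pi_pm prime assms(4) by (intro ball_cong) auto
  finally show ?thesis .
qed

end
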